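(* Let $d\ge1$, $\gamma\in\mathbb N_0^d$ and $\tau<0$. For functions $\varphi$ on $\mathbb N_0^d\times\mathbb R_-$ define $$(S_{\gamma,\tau}\varphi)(\alpha,\lambda)=\begin{cases}\frac{|\lambda-\tau|^d}{|\lambda|^d}\varphi(\alpha-\gamma,\lambda-\tau)&\text{if }\lambda<\tau\text{ and }\alpha\ge\gamma,\\ 0&\text{otherwise.}\end{cases}$$ Then $S_{\gamma,\tau}$ extends to a bounded linear operator on $L^2(\mathbb N_0^d\times\mathbb R_-,d\mu)$ which is unitarily equivalent (via the map $\mathscr S$) to the multiplier operator $f\mapsto \zeta^\gamma e^{-i\tau\zeta_{d+1}}f$ on $DA$. Moreover its adjoint is given by $$(S^*_{\gamma,\tau}\varphi)(\alpha,\lambda)=\frac{|\lambda+\tau|^{d-|\alpha|-|\gamma|}}{|\lambda|^{d-|\alpha|}}\,\frac{(\alpha+\gamma)!}{\alpha!}\,2^{|\gamma|}\,\varphi(\alpha+\gamma,\lambda+\tau).$$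
   Context: $\alpha\ge\gamma$ means $\alpha_i\ge\gamma_i$ for all $i$. $d\mu(\alpha,\lambda)=\alpha!(2/|\lambda|)^{|\alpha|}|\lambda|^{2d}\,d\alpha\,d\lambda$ on $\mathbb N_0^d\times(-\infty,0)$ ($d\alpha$ counting measure). $\mathcal U=\{(\zeta,\zeta_{d+1})\in\mathbb C^d\times\mathbb C:\operatorname{Im}\zeta_{d+1}>\frac14|\zeta|^2\}$, $\rho=\operatorname{Im}\zeta_{d+1}-\frac14|\zeta|^2$; $DA$ is the space of holomorphic $F$ on $\mathcal U$ tending to $0$ as $\operatorname{Im}\zeta_{d+1}\to\infty$ uniformly on $\{|\zeta|\le R\}$ for each $R$, with $\int_{\mathcal U}|\rho^n\partial^n_{\zeta_{d+1}}F|^2\rho^{-d-1}dV<\infty$ for a fixed integer $n>d/2$ (square norm). $\mathscr S: L^2(d\mu)\to DA$ is $(\mathscr S\varphi)(\zeta,\zeta_{d+1})=(2\pi)^{-d-1}\int\zeta^\alpha e^{-i\lambda\zeta_{d+1}}\overline{\varphi(\alpha,\lambda)}|\lambda|^d\,d\alpha\,d\lambda$, a conjugate-linear bijection which is isometric up to a constant factor. *)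

theory Defs
  imports "HOL-Analysis.Analysis"
begin

text \<open>Multi-indices alpha in N_0^d are modelled as nat^'n, with d = CARD('n).  Functions on N_0^d x R_- are functions
  on (nat^'n) x real (values for lambda >= 0 are irrelevant: the measures vanish there).\<close>

definition mi_abs :: "nat^'n \<Rightarrow> nat" where
  "mi_abs a = (\<Sum>i\<in>UNIV. a $ i)"

definition mi_fact :: "nat^'n \<Rightarrow> nat" where
  "mi_fact a = (\<Prod>i\<in>UNIV. fact (a $ i))"

definition mi_le :: "nat^'n \<Rightarrow> nat^'n \<Rightarrow> bool" where
  "mi_le g a \<longleftrightarrow> (\<forall>i. g $ i \<le> a $ i)"

definition mi_pow :: "complex^'n \<Rightarrow> nat^'n \<Rightarrow> complex" where
  "mi_pow z a = (\<Prod>i\<in>UNIV. (z $ i) ^ (a $ i))"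

definition sqnorm_c :: "complex^'n \<Rightarrow> real" where
  "sqnorm_c z = (\<Sum>i\<in>UNIV. (cmod (z $ i))^2)"

definition siegel :: "((complex^'n) \<times> complex) set" where
  "siegel = {(z, w). Im w > sqnorm_c z / 4}"

definition mu_weight :: "(nat^'n) \<times> real \<Rightarrow> real" where
  "mu_weight p = (case p of (a, l) \<Rightarrow>
     if l < 0 then real (mi_fact a) * (2 / \<bar>l\<bar>) ^ mi_abs a * \<bar>l\<bar> ^ (2 * CARD('n)) else 0)"

definition base_measure :: "((nat^'n) \<times> real) measure" where
  "base_measure = count_space UNIV \<Otimes>\<^sub>M lborel"

definition mu :: "((nat^'n) \<times> real) measure" where
  "mu = density base_measure (\<lambda>p. ennreal (mu_weight p))"

definition L2mu :: "((nat^'n) \<times> real \<Rightarrow> complex) set" where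
  "L2mu = {f. f \<in> borel_measurable mu \<and> integrable mu (\<lambda>p. (cmod (f p))^2)}"

definition L2norm :: "((nat^'n) \<times> real \<Rightarrow> complex) \<Rightarrow> real" where
  "L2norm f = sqrt (\<integral>p. (cmod (f p))^2 \<partial>mu)"

definition L2inner :: "((nat^'n) \<times> real \<Rightarrow> complex) \<Rightarrow> ((nat^'n) \<times> real \<Rightarrow> complex) \<Rightarrow> complex" where
  "L2inner f g = (\<integral>p. f p * cnj (g p) \<partial>mu)"

definition scrS :: "((nat^'n) \<times> real \<Rightarrow> complex) \<Rightarrow> (complex^'n) \<times> complex \<Rightarrow> complex" where
  "scrS f = (\<lambda>(z, w). (2 * pi) powr (- real CARD('n) - 1) *
     (\<integral>p. (case p of (a, l) \<Rightarrow>
        (if l < 0 then mi_pow z a * exp (- \<i> * of_real l * w) * cnj (f (a, l)) * of_real (\<bar>l\<bar> ^ CARD('n))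
         else 0)) \<partial>base_measure))"

definition Sop :: "nat^'n \<Rightarrow> real \<Rightarrow> ((nat^'n) \<times> real \<Rightarrow> complex) \<Rightarrow> (nat^'n) \<times> real \<Rightarrow> complex" where
  "Sop g t f = (\<lambda>(a, l). if l < t \<and> mi_le g a
      then of_real (\<bar>l - t\<bar> ^ CARD('n) / \<bar>l\<bar> ^ CARD('n)) * f (a - g, l - t)
      else 0)"

definition Sadj :: "nat^'n \<Rightarrow> real \<Rightarrow> ((nat^'n) \<times> real \<Rightarrow> complex) \<Rightarrow> (nat^'n) \<times> real \<Rightarrow> complex" where
  "Sadj g t f = (\<lambda>(a, l).
      of_real (\<bar>l + t\<bar> powr (real CARD('n) - real (mi_abs a) - real (mi_abs g))
               / \<bar>l\<bar> powr (real CARD('n) - real (mi_abs a))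
               * (real (mi_fact (a + g)) / real (mi_fact a)) * 2 ^ mi_abs g)
      * f (a + g, l + t))"

end

theory Submission
  imports Defs
begin

text \<open>Let \<open>T (a, l) = (a + g, l + t)\<close>. Then \<open>Sop g t f (T p) = r p * f p\<close> and
  \<open>Sadj g t h p = c p * h (T p)\<close> for scalar functions \<open>r\<close> and \<open>c\<close>, and \<open>Sop g t f\<close>
  vanishes off the image of \<open>T\<close>. Since \<open>T\<close> maps counting measure times Lebesgue measure
  bijectively onto its restriction to that image, every claim is a change of variables along
  \<open>T\<close> combined with the weight identity \<open>w (T p) * r p = w p * c p\<close> for the density \<open>w\<close>
  of \<open>\<mu>\<close>. After the change of variables this identity is the adjoint formula, and it turns the square norm of
  \<open>Sop g t f\<close> into the integral of \<open>r c w |f|\<^sup>2\<close>, where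
  \<open>r c = (a+g)!/a! 2\<^bsup>|g|\<^esup> |l|\<^bsup>|a|\<^esup> / |l+t|\<^bsup>|a|+|g|\<^esup>\<close> is bounded by
  \<open>g! 2\<^bsup>|g|\<^esup> / |t|\<^bsup>|g|\<^esup>\<close> through a single term of the binomial expansion of
  \<open>(|l| + |t|)\<^bsup>|a|+|g|\<^esup>\<close>. The intertwining with \<open>scrS\<close> is the same change of variables
  inside the integral defining \<open>scrS\<close>, using \<open>z\<^bsup>a+g\<^esup> = z\<^sup>a z\<^sup>g\<close> and
  \<open>r p * |l+t|\<^sup>d = |l|\<^sup>d\<close>.\<close>

lemma borel_measurable_cnj[measurable]:
  "f \<in> borel_measurable M \<Longrightarrow> (\<lambda>x. cnj (f x)) \<in> borel_measurable M"
  by (rule borel_measurable_continuous_on[OF linear_continuous_on[OF bounded_linear_cnj]])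

lemma integral_mult_bounded_le:
  fixes K H :: "'a \<Rightarrow> real"
  assumes H: "integrable M H" "\<And>x. 0 \<le> H x"
    and K: "K \<in> borel_measurable M" "\<And>x. 0 \<le> K x" "\<And>x. K x \<le> C"
  shows "integrable M (\<lambda>x. K x * H x)" and "(\<integral>x. K x * H x \<partial>M) \<le> C * (\<integral>x. H x \<partial>M)"
proof -
  have CH: "integrable M (\<lambda>x. C * H x)"
    using H(1) by simp
  have le: "K x * H x \<le> C * H x" for x
    by (rule mult_right_mono[OF K(3) H(2)])
  show KH: "integrable M (\<lambda>x. K x * H x)"
  proof (rule Bochner_Integration.integrable_bound[OF CH])
    show "(\<lambda>x. K x * H x) \<in> borel_measurable M"
      using K(1) borel_measurable_integrable[OF H(1)] by measurable
    show "AE x in M. norm (K x * H x) \<le> norm (C * H x)"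
      using le K(2) H(2) by (intro AE_I2) (metis abs_of_nonneg mult_nonneg_nonneg order.trans real_norm_def)
  qed
  have "(\<integral>x. K x * H x \<partial>M) \<le> (\<integral>x. C * H x \<partial>M)"
    by (rule integral_mono[OF KH CH le])
  then show "(\<integral>x. K x * H x \<partial>M) \<le> C * (\<integral>x. H x \<partial>M)"
    by simp
qed

section \<open>Shifts of counting measure times Lebesgue measure\<close>

lemma measurable_count_space_lborel_shift:
  fixes \<phi> :: "'a \<Rightarrow> 'a" and c :: real
  shows "(\<lambda>(a, l). (\<phi> a, l + c)) \<in> count_space UNIV \<Otimes>\<^sub>M lborel \<rightarrow>\<^sub>M count_space UNIV \<Otimes>\<^sub>M lborel"
proof -
  have [measurable]: "\<phi> \<in> count_space UNIV \<rightarrow>\<^sub>M count_space UNIV" by simp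
  show ?thesis by measurable
qed

lemma nn_integral_count_space_lborel_shift:
  fixes \<phi> :: "'a \<Rightarrow> 'a" and c :: real
  assumes "inj \<phi>" and F[measurable]: "F \<in> borel_measurable (count_space UNIV \<Otimes>\<^sub>M lborel)"
  shows "(\<integral>\<^sup>+(a, l). F (\<phi> a, l + c) \<partial>(count_space UNIV \<Otimes>\<^sub>M lborel))
       = (\<integral>\<^sup>+p. indicator (range \<phi> \<times> UNIV) p * F p \<partial>(count_space UNIV \<Otimes>\<^sub>M lborel))"
proof -
  define G where "G a = (\<integral>\<^sup>+l. F (a, l) \<partial>lborel)" for a
  have slice: "(\<lambda>l. F (a, l)) \<in> borel_measurable borel" for a
    using measurable_Pair2[OF F] by simp
  have translate: "(\<integral>\<^sup>+l. F (a, l + c) \<partial>lborel) = G a" for a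
    using nn_integral_real_affine[OF slice, where c=1 and t=c] by (simp add: G_def add.commute)
  have "(\<integral>\<^sup>+(a, l). F (\<phi> a, l + c) \<partial>(count_space UNIV \<Otimes>\<^sub>M lborel))
      = (\<integral>\<^sup>+a. \<integral>\<^sup>+l. F (\<phi> a, l + c) \<partial>lborel \<partial>count_space UNIV)"
    using lborel.nn_integral_fst[OF measurable_compose[OF measurable_count_space_lborel_shift F]]
    by (simp add: case_prod_beta')
  also have "\<dots> = (\<integral>\<^sup>+a. G a \<partial>count_space (range \<phi>))"
    using nn_integral_bij_count_space[of \<phi> UNIV "range \<phi>" G] assms(1)
    by (simp add: translate bij_betw_def)
  also have "\<dots> = (\<integral>\<^sup>+a. \<integral>\<^sup>+l. indicator (range \<phi> \<times> UNIV) (a, l) * F (a, l) \<partial>lborel \<partial>count_space UNIV)"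
    by (subst nn_integral_count_space_indicator)
       (auto intro!: nn_integral_cong simp: G_def indicator_def)
  also have "\<dots> = (\<integral>\<^sup>+p. indicator (range \<phi> \<times> UNIV) p * F p \<partial>(count_space UNIV \<Otimes>\<^sub>M lborel))"
    by (rule lborel.nn_integral_fst) measurable
  finally show ?thesis .
qed

lemma distr_count_space_lborel_shift:
  fixes \<phi> :: "'a \<Rightarrow> 'a" and c :: real
  assumes "inj \<phi>"
  shows "distr (count_space UNIV \<Otimes>\<^sub>M lborel) (count_space UNIV \<Otimes>\<^sub>M lborel) (\<lambda>(a, l). (\<phi> a, l + c))
       = density (count_space UNIV \<Otimes>\<^sub>M lborel) (indicator (range \<phi> \<times> UNIV))"
    (is "distr ?M ?M ?T = density ?M ?D")
proof (rule measure_eqI)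
  fix A assume "A \<in> sets (distr ?M ?M ?T)"
  then have A: "A \<in> sets ?M" by simp
  have R: "range \<phi> \<times> UNIV \<in> sets ?M"
    by (rule pair_measureI) auto
  have "emeasure (distr ?M ?M ?T) A = (\<integral>\<^sup>+p. indicator A p \<partial>distr ?M ?M ?T)"
    using A by simp
  also have "\<dots> = (\<integral>\<^sup>+(a, l). indicator A (\<phi> a, l + c) \<partial>?M)"
    using nn_integral_distr[OF measurable_count_space_lborel_shift borel_measurable_indicator[of A]] A
    by (simp add: case_prod_unfold)
  also have "\<dots> = (\<integral>\<^sup>+p. ?D p * indicator A p \<partial>?M)"
    by (rule nn_integral_count_space_lborel_shift[OF assms borel_measurable_indicator[OF A]])
  also have "\<dots> = emeasure (density ?M ?D) A"
    by (rule emeasure_density[OF borel_measurable_indicator[OF R] A, symmetric])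
  finally show "emeasure (distr ?M ?M ?T) A = emeasure (density ?M ?D) A" .
qed simp

lemma
  fixes \<phi> :: "'a \<Rightarrow> 'a" and c :: real and F :: "'a \<times> real \<Rightarrow> 'b::{banach, second_countable_topology}"
  assumes "inj \<phi>" and F: "F \<in> borel_measurable (count_space UNIV \<Otimes>\<^sub>M lborel)"
  shows integrable_count_space_lborel_shift_iff:
      "integrable (count_space UNIV \<Otimes>\<^sub>M lborel) (\<lambda>(a, l). F (\<phi> a, l + c))
     \<longleftrightarrow> integrable (count_space UNIV \<Otimes>\<^sub>M lborel) (\<lambda>p. indicator (range \<phi> \<times> UNIV) p *\<^sub>R F p)"
    and integral_count_space_lborel_shift:
      "(\<integral>(a, l). F (\<phi> a, l + c) \<partial>(count_space UNIV \<Otimes>\<^sub>M lborel))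
     = (\<integral>p. indicator (range \<phi> \<times> UNIV) p *\<^sub>R F p \<partial>(count_space UNIV \<Otimes>\<^sub>M lborel))"
proof -
  let ?M = "count_space UNIV \<Otimes>\<^sub>M lborel :: ('a \<times> real) measure"
  have R: "range \<phi> \<times> UNIV \<in> sets ?M"
    by (rule pair_measureI) auto
  have distr_eq: "distr ?M ?M (\<lambda>(a, l). (\<phi> a, l + c)) = density ?M (\<lambda>p. ennreal (indicator (range \<phi> \<times> UNIV) p))"
    using distr_count_space_lborel_shift[OF assms(1)] by (simp add: ennreal_indicator)
  note I = borel_measurable_indicator[OF R]
  show "integrable ?M (\<lambda>(a, l). F (\<phi> a, l + c)) \<longleftrightarrow> integrable ?M (\<lambda>p. indicator (range \<phi> \<times> UNIV) p *\<^sub>R F p)"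
    using integrable_distr_eq[OF measurable_count_space_lborel_shift[of \<phi> c] F, unfolded distr_eq] integrable_density[OF F I]
    by (simp add: case_prod_unfold)
  show "(\<integral>(a, l). F (\<phi> a, l + c) \<partial>?M) = (\<integral>p. indicator (range \<phi> \<times> UNIV) p *\<^sub>R F p \<partial>?M)"
    using integral_distr[OF measurable_count_space_lborel_shift[of \<phi> c] F, unfolded distr_eq] integral_density[OF F I]
    by (simp add: case_prod_unfold)
qed

lemma borel_measurable_base_measure_iff:
  "f \<in> borel_measurable (base_measure :: ((nat^'n) \<times> real) measure)
     \<longleftrightarrow> (\<forall>a. (\<lambda>l. f (a, l)) \<in> borel_measurable borel)"
  unfolding base_measure_def
  using measurable_Pair2[of f "count_space UNIV" lborel borel]
  by (auto intro!: measurable_pair_measure_countable1)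

lemma borel_measurable_mu_weight[measurable]:
  "mu_weight \<in> borel_measurable (base_measure :: ((nat^'n) \<times> real) measure)"
  by (simp add: borel_measurable_base_measure_iff mu_weight_def)

lemma
  fixes f :: "(nat^'n) \<times> real \<Rightarrow> 'b::{banach, second_countable_topology}"
  assumes "f \<in> borel_measurable base_measure"
  shows integrable_mu_iff: "integrable mu f \<longleftrightarrow> integrable base_measure (\<lambda>p. mu_weight p *\<^sub>R f p)"
    and integral_mu: "integral\<^sup>L mu f = (\<integral>p. mu_weight p *\<^sub>R f p \<partial>base_measure)"
proof -
  have nonneg: "AE p in base_measure. 0 \<le> mu_weight p"
    by (intro AE_I2) (simp add: mu_weight_def case_prod_unfold)
  show "integrable mu f \<longleftrightarrow> integrable base_measure (\<lambda>p. mu_weight p *\<^sub>R f p)"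
    unfolding mu_def by (rule integrable_density[OF assms borel_measurable_mu_weight nonneg])
  show "integral\<^sup>L mu f = (\<integral>p. mu_weight p *\<^sub>R f p \<partial>base_measure)"
    unfolding mu_def by (rule integral_density[OF assms borel_measurable_mu_weight nonneg])
qed

lemma L2mu_iff:
  "f \<in> L2mu \<longleftrightarrow> f \<in> borel_measurable base_measure
     \<and> integrable base_measure (\<lambda>p. mu_weight p * (cmod (f p))\<^sup>2)"
proof -
  have "borel_measurable mu = borel_measurable base_measure"
    by (rule measurable_cong_sets) (simp_all add: mu_def)
  then show ?thesis
    by (auto simp: L2mu_def integrable_mu_iff)
qed

lemma L2norm_eq:
  "f \<in> borel_measurable base_measure
     \<Longrightarrow> L2norm f = sqrt (\<integral>p. mu_weight p * (cmod (f p))\<^sup>2 \<partial>base_measure)"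
  by (simp add: L2norm_def integral_mu)

lemma L2inner_eq:
  "f \<in> borel_measurable base_measure \<Longrightarrow> h \<in> borel_measurable base_measure
     \<Longrightarrow> L2inner f h = (\<integral>p. mu_weight p *\<^sub>R (f p * cnj (h p)) \<partial>base_measure)"
  by (simp add: L2inner_def integral_mu)

lemma range_add_eq_mi_le: "range (\<lambda>a::nat^'n. a + g) = {a. mi_le g a}"
proof (intro set_eqI iffI)
  fix a assume "a \<in> {a. mi_le g a}"
  then have "a = (a - g) + g" by (simp add: mi_le_def vec_eq_iff)
  then show "a \<in> range (\<lambda>a. a + g)" by blast
qed (auto simp: mi_le_def)

lemma
  fixes g :: "nat^'n" and t :: real and F :: "(nat^'n) \<times> real \<Rightarrow> 'b::{banach, second_countable_topology}"
  assumes F: "F \<in> borel_measurable base_measure" and supp: "\<And>a l. \<not> mi_le g a \<Longrightarrow> F (a, l) = 0"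
  shows integrable_base_measure_shift_iff:
      "integrable base_measure (\<lambda>(a, l). F (a + g, l + t)) \<longleftrightarrow> integrable base_measure F"
    and integral_base_measure_shift:
      "(\<integral>(a, l). F (a + g, l + t) \<partial>base_measure) = integral\<^sup>L base_measure F"
proof -
  have indicator: "(\<lambda>p. indicator (range (\<lambda>a. a + g) \<times> UNIV) p *\<^sub>R F p) = F"
    using supp by (auto simp: range_add_eq_mi_le indicator_def fun_eq_iff)
  have inj: "inj (\<lambda>a::nat^'n. a + g)" by simp
  show "integrable base_measure (\<lambda>(a, l). F (a + g, l + t)) \<longleftrightarrow> integrable base_measure F"
    using integrable_count_space_lborel_shift_iff[OF inj F[unfolded base_measure_def], where c=t]
    unfolding indicator base_measure_def .
  show "(\<integral>(a, l). F (a + g, l + t) \<partial>base_measure) = integral\<^sup>L base_measure F"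
    using integral_count_space_lborel_shift[OF inj F[unfolded base_measure_def], where c=t]
    unfolding indicator base_measure_def .
qed

lemma integrable_base_measure_shift:
  fixes g :: "nat^'n" and t :: real and F :: "(nat^'n) \<times> real \<Rightarrow> 'b::{banach, second_countable_topology}"
  assumes F: "integrable base_measure F"
  shows "integrable base_measure (\<lambda>(a, l). F (a + g, l + t))"
proof -
  have inj: "inj (\<lambda>a::nat^'n. a + g)" by simp
  have "range (\<lambda>a. a + g) \<times> UNIV \<in> sets (count_space UNIV \<Otimes>\<^sub>M lborel)"
    by (rule pair_measureI) auto
  from integrable_mult_indicator[OF this F[unfolded base_measure_def]] show ?thesis
    using integrable_count_space_lborel_shift_iff[OF inj borel_measurable_integrable, where c=t]
      F[unfolded base_measure_def]
    unfolding base_measure_def by blast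
qed

lemma mi_abs_add: "mi_abs (a + g) = mi_abs a + mi_abs (g::nat^'n)"
  by (simp add: mi_abs_def sum.distrib)

lemma mi_fact_pos: "0 < mi_fact a"
  by (simp add: mi_fact_def)

lemma mi_pow_add: "mi_pow z (a + g) = mi_pow z a * mi_pow z (g::nat^'n)"
  by (simp add: mi_pow_def power_add prod.distrib)

lemma fact_ratio_power_le:
  fixes x c :: real
  assumes x: "x > 0" and c: "c > 0"
  shows "fact (a + b) / fact a * x ^ a / (x + c) ^ (a + b) \<le> fact b / c ^ b"
proof -
  have "of_nat ((a + b) choose a) * x ^ a * c ^ (a + b - a)
      \<le> (\<Sum>k\<le>a + b. of_nat ((a + b) choose k) * x ^ k * c ^ (a + b - k))"
    by (rule member_le_sum) (use x c in auto)
  then have binomial: "of_nat ((a + b) choose a) * x ^ a * c ^ b \<le> (x + c) ^ (a + b)"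
    by (simp add: binomial_ring)
  have "fact (a + b) / fact a * x ^ a / (x + c) ^ (a + b)
      = fact b * (of_nat ((a + b) choose a) * x ^ a) / (x + c) ^ (a + b)"
    by (simp add: binomial_fact field_simps)
  also have "\<dots> \<le> fact b * (of_nat ((a + b) choose a) * x ^ a) / (of_nat ((a + b) choose a) * x ^ a * c ^ b)"
    by (rule divide_left_mono[OF binomial]) (use x c in auto)
  also have "\<dots> = fact b / c ^ b"
    using x c by (simp add: field_simps)
  finally show ?thesis .
qed

lemma mi_fact_ratio_power_le:
  fixes x c :: real and a g :: "nat^'n"
  assumes "x > 0" and "c > 0"
  shows "real (mi_fact (a + g)) / real (mi_fact a) * x ^ mi_abs a / (x + c) ^ (mi_abs a + mi_abs g)
     \<le> real (mi_fact g) / c ^ mi_abs g"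
proof -
  have "real (mi_fact (a + g)) / real (mi_fact a) * x ^ mi_abs a / (x + c) ^ (mi_abs a + mi_abs g)
     = (\<Prod>i\<in>UNIV. fact (a$i + g$i) / fact (a$i) * x ^ (a$i) / (x + c) ^ (a$i + g$i))"
    by (simp add: mi_fact_def mi_abs_def prod_dividef power_sum prod.distrib
        sum.distrib[symmetric] power_add)
  also have "\<dots> \<le> (\<Prod>i\<in>UNIV. fact (g$i) / c ^ (g$i))"
    by (rule prod_mono) (use assms fact_ratio_power_le in auto)
  also have "\<dots> = real (mi_fact g) / c ^ mi_abs g"
    by (simp add: mi_fact_def mi_abs_def prod_dividef power_sum)
  finally show ?thesis .
qed

section \<open>The coefficients of the shift and of its adjoint\<close>

definition Sop_coeff :: "real \<Rightarrow> (nat^'n) \<times> real \<Rightarrow> real" where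
  "Sop_coeff t = (\<lambda>(a, l). if l < 0 then \<bar>l\<bar> ^ CARD('n) / \<bar>l + t\<bar> ^ CARD('n) else 0)"

definition Sadj_coeff :: "nat^'n \<Rightarrow> real \<Rightarrow> (nat^'n) \<times> real \<Rightarrow> real" where
  "Sadj_coeff g t = (\<lambda>(a, l).
      \<bar>l + t\<bar> powr (real CARD('n) - real (mi_abs a) - real (mi_abs g))
        / \<bar>l\<bar> powr (real CARD('n) - real (mi_abs a))
      * (real (mi_fact (a + g)) / real (mi_fact a)) * 2 ^ mi_abs g)"

lemma Sop_shift:
  fixes g :: "nat^'n"
  assumes "t < 0"
  shows "Sop g t f (a + g, l + t) = of_real (Sop_coeff t (a, l)) * f (a, l)"
  using assms by (simp add: Sop_def Sop_coeff_def mi_le_def)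

lemma Sop_eq_0: "\<not> mi_le g a \<Longrightarrow> Sop g t f (a, l) = 0"
  by (simp add: Sop_def)

lemma Sadj_eq: "Sadj g t h (a, l) = of_real (Sadj_coeff g t (a, l)) * h (a + g, l + t)"
  by (simp add: Sadj_def Sadj_coeff_def)

lemma Sop_coeff_nonneg: "0 \<le> Sop_coeff t p"
  by (simp add: Sop_coeff_def case_prod_unfold)

lemma Sadj_coeff_nonneg: "0 \<le> Sadj_coeff g t p"
  by (simp add: Sadj_coeff_def case_prod_unfold)

lemma Sadj_coeff_neg:
  fixes a g :: "nat^'n"
  assumes "l < 0" "t < 0"
  shows "Sadj_coeff g t (a, l) = (- l - t) ^ CARD('n) / (- l - t) ^ (mi_abs a + mi_abs g)
      / ((- l) ^ CARD('n) / (- l) ^ mi_abs a) * (real (mi_fact (a + g)) / real (mi_fact a)) * 2 ^ mi_abs g"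
proof -
  have "\<bar>l + t\<bar> powr (real CARD('n) - real (mi_abs a) - real (mi_abs g))
      = (- l - t) ^ CARD('n) / (- l - t) ^ (mi_abs a + mi_abs g)"
    using assms by (simp add: powr_diff powr_realpow diff_diff_eq flip: of_nat_add)
  moreover have "\<bar>l\<bar> powr (real CARD('n) - real (mi_abs a)) = (- l) ^ CARD('n) / (- l) ^ mi_abs a"
    using assms by (simp add: powr_diff powr_realpow)
  ultimately show ?thesis by (simp only: Sadj_coeff_def case_prod_conv)
qed

lemma mu_weight_neg:
  fixes a :: "nat^'n"
  shows "l < 0 \<Longrightarrow> mu_weight (a, l) = real (mi_fact a) * (2 / (- l)) ^ mi_abs a * (- l) ^ (2 * CARD('n))"
  by (simp add: mu_weight_def)

lemma mu_weight_Sop_Sadj_coeff: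
  fixes a g :: "nat^'n"
  assumes t: "t < 0"
  shows "mu_weight (a + g, l + t) * Sop_coeff t (a, l) = mu_weight (a, l) * Sadj_coeff g t (a, l)"
proof (cases "l < 0")
  case True
  have weights: "F' * (2 / y) ^ (n + k) * y ^ (2 * d) * (x ^ d / y ^ d)
      = F * (2 / x) ^ n * x ^ (2 * d) * (y ^ d / y ^ (n + k) / (x ^ d / x ^ n) * (F' / F) * 2 ^ k)"
    if "x > 0" "y > 0" "F > 0" for x y F F' :: real and n k d :: nat
    using that by (simp add: field_simps power_add power_mult_distrib power_mult power2_eq_square mult_ac)
  have "\<bar>l + t\<bar> = - l - t" "\<bar>l\<bar> = - l" using True t by auto
  then show ?thesis
    using weights[of "- l" "- l - t" "real (mi_fact a)"] True t mi_fact_pos[of a]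
    by (simp add: Sadj_coeff_neg Sop_coeff_def mu_weight_neg mi_abs_add)
next
  case False
  then show ?thesis by (simp add: Sop_coeff_def mu_weight_def)
qed

lemma Sop_Sadj_coeff_le:
  fixes g :: "nat^'n"
  assumes t: "t < 0"
  shows "Sop_coeff t p * Sadj_coeff g t p \<le> 2 ^ mi_abs g * real (mi_fact g) / (- t) ^ mi_abs g"
proof -
  obtain a l where p: "p = (a, l)" by (cases p)
  show ?thesis
  proof (cases "l < 0")
    case True
    have "Sop_coeff t p * Sadj_coeff g t p
        = 2 ^ mi_abs g * (real (mi_fact (a + g)) / real (mi_fact a) * (- l) ^ mi_abs a
            / (- l + - t) ^ (mi_abs a + mi_abs g))"
      using True t mi_fact_pos[of a]
      by (simp add: p Sop_coeff_def Sadj_coeff_neg field_simps power_add)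
    also have "\<dots> \<le> 2 ^ mi_abs g * (real (mi_fact g) / (- t) ^ mi_abs g)"
      by (rule mult_left_mono[OF mi_fact_ratio_power_le]) (use True t in auto)
    finally show ?thesis by simp
  qed (use t in \<open>simp add: p Sop_coeff_def\<close>)
qed

lemma borel_measurable_Sop:
  fixes g :: "nat^'n"
  assumes "f \<in> borel_measurable base_measure"
  shows "Sop g t f \<in> borel_measurable base_measure"
proof (unfold borel_measurable_base_measure_iff, intro allI)
  fix a :: "nat^'n"
  have [measurable]: "(\<lambda>l. f (a - g, l)) \<in> borel_measurable borel"
    using assms by (simp add: borel_measurable_base_measure_iff)
  have "(\<lambda>l. if l < t \<and> mi_le g a then of_real (\<bar>l - t\<bar> ^ CARD('n) / \<bar>l\<bar> ^ CARD('n)) * f (a - g, l - t) else 0)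
      \<in> borel_measurable borel"
    by measurable
  then show "(\<lambda>l. Sop g t f (a, l)) \<in> borel_measurable borel"
    by (simp add: Sop_def)
qed

lemma borel_measurable_Sadj:
  fixes g :: "nat^'n"
  assumes "h \<in> borel_measurable base_measure"
  shows "Sadj g t h \<in> borel_measurable base_measure"
proof (unfold borel_measurable_base_measure_iff, intro allI)
  fix a :: "nat^'n"
  have [measurable]: "(\<lambda>l. h (a + g, l)) \<in> borel_measurable borel"
    using assms by (simp add: borel_measurable_base_measure_iff)
  have "(\<lambda>l. of_real (Sadj_coeff g t (a, l)) * h (a + g, l + t)) \<in> borel_measurable borel"
    unfolding Sadj_coeff_def by measurable
  then show "(\<lambda>l. Sadj g t h (a, l)) \<in> borel_measurable borel"
    by (simp add: Sadj_eq)
qed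

lemma borel_measurable_Sop_Sadj_coeff[measurable]:
  "(\<lambda>p. Sop_coeff t p * Sadj_coeff g t p) \<in> borel_measurable base_measure"
  unfolding borel_measurable_base_measure_iff Sop_coeff_def Sadj_coeff_def case_prod_conv
  by measurable

section \<open>The shift operator and its adjoint\<close>

definition scrS_integrand ::
    "((nat^'n) \<times> real \<Rightarrow> complex) \<Rightarrow> complex^'n \<Rightarrow> complex \<Rightarrow> (nat^'n) \<times> real \<Rightarrow> complex" where
  "scrS_integrand f z w = (\<lambda>(a, l). if l < 0
     then mi_pow z a * exp (- \<i> * of_real l * w) * cnj (f (a, l)) * of_real (\<bar>l\<bar> ^ CARD('n))
     else 0)"

lemma scrS_eq:
  fixes f :: "(nat^'n) \<times> real \<Rightarrow> complex"
  shows "scrS f (z, w) = (2 * pi) powr (- real CARD('n) - 1) * integral\<^sup>L base_measure (scrS_integrand f z w)"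
  by (simp add: scrS_def scrS_integrand_def)

lemma borel_measurable_scrS_integrand:
  fixes f :: "(nat^'n) \<times> real \<Rightarrow> complex"
  assumes "f \<in> borel_measurable base_measure"
  shows "scrS_integrand f z w \<in> borel_measurable base_measure"
proof (unfold borel_measurable_base_measure_iff, intro allI)
  fix a :: "nat^'n"
  have [measurable]: "(\<lambda>l. f (a, l)) \<in> borel_measurable borel"
    using assms by (simp add: borel_measurable_base_measure_iff)
  have "(\<lambda>l. if l < 0 then mi_pow z a * exp (- \<i> * of_real l * w) * cnj (f (a, l)) * of_real (\<bar>l\<bar> ^ CARD('n))
      else 0) \<in> borel_measurable borel"
    by measurable
  then show "(\<lambda>l. scrS_integrand f z w (a, l)) \<in> borel_measurable borel"
    by (simp add: scrS_integrand_def)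
qed

lemma scrS_integrand_Sop_shift:
  fixes g :: "nat^'n"
  assumes t: "t < 0"
  shows "scrS_integrand (Sop g t f) z w (a + g, l + t)
       = mi_pow z g * exp (- \<i> * of_real t * w) * scrS_integrand f z w (a, l)"
proof (cases "l < 0")
  case True
  have exp: "exp (- \<i> * of_real (l + t) * w) = exp (- \<i> * of_real l * w) * exp (- \<i> * of_real t * w)"
    by (simp add: exp_add[symmetric] algebra_simps)
  have coeff: "complex_of_real (\<bar>l\<bar> ^ CARD('n))
      = of_real (Sop_coeff t (a, l)) * of_real (\<bar>l + t\<bar> ^ CARD('n))"
    using True t by (simp add: Sop_coeff_def flip: of_real_mult)
  have "l + t < 0" using True t by simp
  then show ?thesis
    unfolding scrS_integrand_def case_prod_conv Sop_shift[OF t] mi_pow_add exp coeff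
      complex_cnj_mult complex_cnj_complex_of_real
    using True by (simp add: mult_ac)
next
  case False
  then show ?thesis
    using t by (simp add: scrS_integrand_def Sop_shift Sop_coeff_def)
qed

lemma
  fixes g :: "nat^'n"
  assumes t: "t < 0" and f: "f \<in> L2mu"
  shows Sop_in_L2mu: "Sop g t f \<in> L2mu"
    and L2norm_Sop_le:
      "L2norm (Sop g t f) \<le> sqrt (2 ^ mi_abs g * real (mi_fact g) / (- t) ^ mi_abs g) * L2norm f"
proof -
  define C where "C = 2 ^ mi_abs g * real (mi_fact g) / (- t) ^ mi_abs g"
  define F where "F p = mu_weight p * (cmod (f p))\<^sup>2" for p
  define G where "G p = mu_weight p * (cmod (Sop g t f p))\<^sup>2" for p
  have fm: "f \<in> borel_measurable base_measure" and F_int: "integrable base_measure F"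
    using f by (simp_all add: L2mu_iff F_def[abs_def])
  have Sm: "Sop g t f \<in> borel_measurable base_measure"
    by (rule borel_measurable_Sop[OF fm])
  have G_shift: "(\<lambda>(a, l). G (a + g, l + t)) = (\<lambda>p. Sop_coeff t p * Sadj_coeff g t p * F p)"
  proof (intro ext, clarify)
    fix a l
    have "G (a + g, l + t)
        = mu_weight (a + g, l + t) * Sop_coeff t (a, l) * Sop_coeff t (a, l) * (cmod (f (a, l)))\<^sup>2"
      using Sop_coeff_nonneg[of t "(a, l)"]
      by (simp add: G_def Sop_shift[OF t] norm_mult power2_eq_square)
    also have "\<dots> = Sop_coeff t (a, l) * Sadj_coeff g t (a, l) * F (a, l)"
      unfolding mu_weight_Sop_Sadj_coeff[OF t] F_def by (simp add: mult_ac)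
    finally show "G (a + g, l + t) = Sop_coeff t (a, l) * Sadj_coeff g t (a, l) * F (a, l)" .
  qed
  have F_nonneg: "0 \<le> F p" for p
    by (simp add: F_def mu_weight_def case_prod_unfold)
  note bound = integral_mult_bounded_le[OF F_int F_nonneg borel_measurable_Sop_Sadj_coeff
      mult_nonneg_nonneg[OF Sop_coeff_nonneg Sadj_coeff_nonneg] Sop_Sadj_coeff_le[OF t, where g=g],
      folded C_def]
  have Gm: "G \<in> borel_measurable base_measure"
    unfolding G_def using Sm by measurable
  have G_out: "\<not> mi_le g a \<Longrightarrow> G (a, l) = 0" for a l
    by (simp add: G_def Sop_eq_0)
  have G_int: "integrable base_measure G"
    using bound(1) integrable_base_measure_shift_iff[where g=g and t=t, OF Gm G_out]
    by (simp add: G_shift)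
  show "Sop g t f \<in> L2mu"
    using Sm G_int by (simp add: L2mu_iff G_def[abs_def])
  have "L2norm (Sop g t f) = sqrt (integral\<^sup>L base_measure G)"
    by (simp add: L2norm_eq[OF Sm] G_def[abs_def])
  also have "\<dots> = sqrt (\<integral>p. Sop_coeff t p * Sadj_coeff g t p * F p \<partial>base_measure)"
    using integral_base_measure_shift[where g=g and t=t, OF Gm G_out] by (simp add: G_shift)
  also have "\<dots> \<le> sqrt (C * integral\<^sup>L base_measure F)"
    using bound(2) by simp
  also have "\<dots> = sqrt C * L2norm f"
    by (simp add: L2norm_eq[OF fm] F_def[abs_def] real_sqrt_mult)
  finally show "L2norm (Sop g t f) \<le> sqrt C * L2norm f" .
qed

text \<open>No integrability is needed, so the Siegel-domain hypothesis of the theorem goes unused: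
  the change of variables also relates the two Bochner integrals when both take the junk
  value 0.\<close>

lemma scrS_Sop:
  fixes g :: "nat^'n"
  assumes t: "t < 0" and f: "f \<in> borel_measurable base_measure"
  shows "scrS (Sop g t f) (z, w) = mi_pow z g * exp (- \<i> * of_real t * w) * scrS f (z, w)"
proof -
  have m: "scrS_integrand (Sop g t f) z w \<in> borel_measurable base_measure"
    by (rule borel_measurable_scrS_integrand[OF borel_measurable_Sop[OF f]])
  have out: "\<not> mi_le g a \<Longrightarrow> scrS_integrand (Sop g t f) z w (a, l) = 0" for a l
    by (simp add: scrS_integrand_def Sop_eq_0)
  have "integral\<^sup>L base_measure (scrS_integrand (Sop g t f) z w)
      = (\<integral>(a, l). scrS_integrand (Sop g t f) z w (a + g, l + t) \<partial>base_measure)"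
    by (rule integral_base_measure_shift[OF m out, symmetric])
  also have "\<dots> = (\<integral>p. mi_pow z g * exp (- \<i> * of_real t * w) * scrS_integrand f z w p \<partial>base_measure)"
    by (simp add: scrS_integrand_Sop_shift[OF t] split_beta')
  finally show ?thesis
    by (simp add: scrS_eq mult_ac)
qed

lemma Sadj_in_L2mu:
  fixes g :: "nat^'n"
  assumes t: "t < 0" and h: "h \<in> L2mu"
  shows "Sadj g t h \<in> L2mu"
proof -
  define H where "H p = mu_weight p * (cmod (h p))\<^sup>2" for p
  have hm: "h \<in> borel_measurable base_measure" and H_int: "integrable base_measure H"
    using h by (simp_all add: L2mu_iff H_def[abs_def])
  have H_shift_int: "integrable base_measure (\<lambda>(a, l). H (a + g, l + t))"
    by (rule integrable_base_measure_shift[OF H_int])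
  have "mu_weight (a, l) * (cmod (Sadj g t h (a, l)))\<^sup>2
      = Sop_coeff t (a, l) * Sadj_coeff g t (a, l) * H (a + g, l + t)" for a l
  proof -
    have "mu_weight (a, l) * (cmod (Sadj g t h (a, l)))\<^sup>2
        = mu_weight (a, l) * Sadj_coeff g t (a, l) * Sadj_coeff g t (a, l)
          * (cmod (h (a + g, l + t)))\<^sup>2"
      using Sadj_coeff_nonneg[of g t "(a, l)"]
      by (simp add: Sadj_eq norm_mult power2_eq_square)
    also have "\<dots> = Sop_coeff t (a, l) * Sadj_coeff g t (a, l) * H (a + g, l + t)"
      unfolding mu_weight_Sop_Sadj_coeff[OF t, symmetric] H_def by (simp add: mult_ac)
    finally show ?thesis .
  qed
  then have "(\<lambda>p. mu_weight p * (cmod (Sadj g t h p))\<^sup>2)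
      = (\<lambda>p. Sop_coeff t p * Sadj_coeff g t p * (\<lambda>(a, l). H (a + g, l + t)) p)"
    by (auto simp: fun_eq_iff)
  moreover have "integrable base_measure
      (\<lambda>p. Sop_coeff t p * Sadj_coeff g t p * (\<lambda>(a, l). H (a + g, l + t)) p)"
    by (rule integral_mult_bounded_le(1)[OF H_shift_int _ borel_measurable_Sop_Sadj_coeff
          mult_nonneg_nonneg[OF Sop_coeff_nonneg Sadj_coeff_nonneg] Sop_Sadj_coeff_le[OF t]])
       (simp add: H_def mu_weight_def case_prod_unfold)
  ultimately show ?thesis
    using borel_measurable_Sadj[OF hm] by (simp add: L2mu_iff)
qed

lemma L2inner_Sop_Sadj:
  fixes g :: "nat^'n"
  assumes t: "t < 0"
    and f: "f \<in> borel_measurable base_measure" and h: "h \<in> borel_measurable base_measure"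
  shows "L2inner (Sop g t f) h = L2inner f (Sadj g t h)"
proof -
  define P where "P p = mu_weight p *\<^sub>R (Sop g t f p * cnj (h p))" for p
  have Pm: "P \<in> borel_measurable base_measure"
    unfolding P_def using borel_measurable_Sop[OF f] h by measurable
  have P_out: "\<not> mi_le g a \<Longrightarrow> P (a, l) = 0" for a l
    by (simp add: P_def Sop_eq_0)
  have P_shift: "P (a + g, l + t) = mu_weight (a, l) *\<^sub>R (f (a, l) * cnj (Sadj g t h (a, l)))" for a l
  proof -
    have "P (a + g, l + t)
        = of_real (mu_weight (a + g, l + t) * Sop_coeff t (a, l)) * f (a, l) * cnj (h (a + g, l + t))"
      by (simp add: P_def Sop_shift[OF t] scaleR_conv_of_real mult_ac)
    also have "\<dots> = mu_weight (a, l) *\<^sub>R (f (a, l) * cnj (Sadj g t h (a, l)))"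
      unfolding mu_weight_Sop_Sadj_coeff[OF t] by (simp add: Sadj_eq scaleR_conv_of_real mult_ac)
    finally show ?thesis .
  qed
  have "L2inner (Sop g t f) h = integral\<^sup>L base_measure P"
    by (simp add: L2inner_eq[OF borel_measurable_Sop[OF f] h] P_def[abs_def])
  also have "\<dots> = (\<integral>(a, l). P (a + g, l + t) \<partial>base_measure)"
    by (rule integral_base_measure_shift[OF Pm P_out, symmetric])
  also have "\<dots> = L2inner f (Sadj g t h)"
    by (simp add: L2inner_eq[OF f borel_measurable_Sadj[OF h]] P_shift case_prod_unfold)
  finally show ?thesis .
qed

theorem theorem1p5:
  fixes g :: "nat^'n" and t :: real
  assumes "t < 0"
  shows "(\<exists>C. \<forall>f\<in>L2mu. Sop g t f \<in> L2mu \<and> L2norm (Sop g t f) \<le> C * L2norm f)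
    \<and> (\<forall>f\<in>L2mu. \<forall>(z, w)\<in>siegel.
          scrS (Sop g t f) (z, w) = mi_pow z g * exp (- \<i> * of_real t * w) * scrS f (z, w))
    \<and> (\<forall>f\<in>L2mu. \<forall>h\<in>L2mu. Sadj g t h \<in> L2mu \<and>
          L2inner (Sop g t f) h = L2inner f (Sadj g t h))"
proof -
  have m: "\<And>f. f \<in> L2mu \<Longrightarrow> f \<in> borel_measurable base_measure"
    by (simp add: L2mu_iff)
  show ?thesis
    using Sop_in_L2mu[OF assms] L2norm_Sop_le[OF assms] scrS_Sop[OF assms m]
      Sadj_in_L2mu[OF assms] L2inner_Sop_Sadj[OF assms m m]
    by (intro conjI) (blast, auto)
qed

end
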